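(* Let $f\in L^\infty(\mathbb{T})$, let $N$ and $k$ be positive integers, and define $g$ on $\mathbb{T}$ by $g(e^{i\theta})=f(e^{ik\theta})$. Then $\|A_{f,N}\|=\|A_{g,kN}\|$.
   Context: $\mathbb{T}$ is the unit circle with normalized Lebesgue measure, $L^2=L^2(\mathbb{T})$, and $\hat f(n)=\frac{1}{2\pi}\int_0^{2\pi} f(e^{i\theta})e^{-in\theta}\,d\theta$. $\mathcal{P}_M$ is the subspace of $L^2$ of complex polynomials of degree at most $M$. For $f\in L^\infty$, $A_{f,M}$ is the compression to $\mathcal{P}_M$ of the operator of multiplication by $f$ on $L^2$; equivalently its matrix with respect to the orthonormal basis $1,z,\dots,z^M$ is the Toeplitz matrix $(\hat f(j-l))_{j,l=0}^M$. $\|\cdot\|$ is the operator norm on $\mathcal{P}_M$. *)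

theory Defs
  imports "HOL-Analysis.Analysis"
begin

text \<open>Functions on the unit circle are modelled as complex-valued functions on
  complex numbers, of which only the values on the unit circle (points cis t)
  matter.  Membership in L-infinity of the circle: measurable in the angle
  variable on [0, 2 pi] and essentially bounded there (normalized Lebesgue
  measure and Lebesgue measure on [0, 2 pi] have the same null sets).\<close>

definition Linf_circle :: "(complex \<Rightarrow> complex) \<Rightarrow> bool" where
  "Linf_circle f \<longleftrightarrow>
     set_borel_measurable lborel {0..2*pi} (\<lambda>t. f (cis t)) \<and>
     (\<exists>C. AE t in lborel. t \<in> {0..2*pi} \<longrightarrow> norm (f (cis t)) \<le> C)"

definition fourier_coeff :: "(complex \<Rightarrow> complex) \<Rightarrow> int \<Rightarrow> complex" where
  "fourier_coeff f n =
     complex_of_real (1 / (2*pi)) *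
       (LINT t:{0..2*pi}|lborel. f (cis t) * cis (- (of_int n * t)))"

text \<open>Operator norm of the compression A_{f,M} to the polynomials of degree at
  most M, i.e. the operator norm (w.r.t. the Euclidean norm on C^(M+1)) of the
  Toeplitz matrix (fourier_coeff f (j - l)) for j, l = 0..M.\<close>

definition toeplitz_norm :: "(complex \<Rightarrow> complex) \<Rightarrow> nat \<Rightarrow> real" where
  "toeplitz_norm f M =
     Sup {sqrt (\<Sum>j\<le>M. (cmod (\<Sum>l\<le>M. fourier_coeff f (int j - int l) * x l))\<^sup>2)
          | x :: nat \<Rightarrow> complex. (\<Sum>l\<le>M. (cmod (x l))\<^sup>2) \<le> 1}"

end

theory Submission
  imports Defs
begin

text \<open>The Fourier coefficients of g(z) = f(z^k) are those of f spread out: the n-th one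
  is the (n div k)-th coefficient of f when k divides n, and 0 otherwise.  Hence the (j, l)
  entry of A_{g,kN} vanishes unless j = l mod k, so after sorting the indices by their
  residue mod k the matrix is block diagonal.  The block of residue 0 is A_{f,N} itself and
  every other block is a submatrix of it, so both operators have the same norm.

  The coefficient formula comes from substituting s = kt: the integral over [0, 2 pi] of
  f(e^{iks}) e^{-ins} becomes a sum of k translates of one period, weighted by the powers of
  the root of unity e^{-2 pi i n/k}, and these powers add up to k or to 0.\<close>

section \<open>Toeplitz quadratic forms\<close>

definition toeplitz_form :: "(int \<Rightarrow> complex) \<Rightarrow> nat \<Rightarrow> (nat \<Rightarrow> complex) \<Rightarrow> real" where
  "toeplitz_form c M x = (\<Sum>j\<le>M. (cmod (\<Sum>l\<le>M. c (int j - int l) * x l))\<^sup>2)"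

definition sqnorm :: "nat \<Rightarrow> (nat \<Rightarrow> complex) \<Rightarrow> real" where
  "sqnorm M x = (\<Sum>l\<le>M. (cmod (x l))\<^sup>2)"

definition toeplitz_opnorm :: "(int \<Rightarrow> complex) \<Rightarrow> nat \<Rightarrow> real" where
  "toeplitz_opnorm c M = Sup {sqrt (toeplitz_form c M x) | x. sqnorm M x \<le> 1}"

lemma toeplitz_norm_eq_opnorm: "toeplitz_norm f M = toeplitz_opnorm (fourier_coeff f) M"
  unfolding toeplitz_norm_def toeplitz_opnorm_def toeplitz_form_def sqnorm_def ..

lemma toeplitz_form_nonneg: "toeplitz_form c M x \<ge> 0"
  unfolding toeplitz_form_def by (auto intro: sum_nonneg)

lemma sqnorm_nonneg: "sqnorm M x \<ge> 0"
  unfolding sqnorm_def by (auto intro: sum_nonneg)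

lemma toeplitz_form_scale: "toeplitz_form c M (\<lambda>l. r * x l) = (cmod r)\<^sup>2 * toeplitz_form c M x"
proof -
  have "(\<Sum>l\<le>M. c (int j - int l) * (r * x l)) = r * (\<Sum>l\<le>M. c (int j - int l) * x l)" for j
    by (simp add: sum_distrib_left mult.left_commute)
  then show ?thesis
    unfolding toeplitz_form_def by (simp add: norm_mult power_mult_distrib flip: sum_distrib_left)
qed

lemma sqnorm_scale: "sqnorm M (\<lambda>l. r * x l) = (cmod r)\<^sup>2 * sqnorm M x"
  unfolding sqnorm_def by (simp add: sum_distrib_left norm_mult power_mult_distrib)

lemma sqnorm_eq_0_imp_toeplitz_form_eq_0:
  assumes "sqnorm M x = 0" shows "toeplitz_form c M x = 0"
proof -
  have "\<forall>l\<in>{..M}. (cmod (x l))\<^sup>2 = 0"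
    using assms unfolding sqnorm_def by (subst sum_nonneg_eq_0_iff[symmetric]) auto
  then show ?thesis unfolding toeplitz_form_def by simp
qed

lemma bdd_above_toeplitz_form:
  "bdd_above {sqrt (toeplitz_form c M x) | x. sqnorm M x \<le> 1}"
proof (rule bdd_aboveI)
  fix v assume "v \<in> {sqrt (toeplitz_form c M x) | x. sqnorm M x \<le> 1}"
  then obtain x where v: "v = sqrt (toeplitz_form c M x)" and x: "sqnorm M x \<le> 1" by auto
  have x_le_1: "cmod (x l) \<le> 1" if "l \<le> M" for l
  proof -
    have "(cmod (x l))\<^sup>2 \<le> 1"
      using member_le_sum[of l "{..M}" "\<lambda>l. (cmod (x l))\<^sup>2"] that x by (simp add: sqnorm_def)
    then show ?thesis by (simp add: power_le_one_iff abs_square_le_1)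
  qed
  have "cmod (\<Sum>l\<le>M. c (int j - int l) * x l) \<le> (\<Sum>l\<le>M. cmod (c (int j - int l)))" for j
    by (rule order_trans[OF norm_sum sum_mono]) (auto simp: norm_mult intro!: mult_left_le x_le_1)
  then have "toeplitz_form c M x \<le> (\<Sum>j\<le>M. (\<Sum>l\<le>M. cmod (c (int j - int l)))\<^sup>2)"
    unfolding toeplitz_form_def by (intro sum_mono power_mono) auto
  then show "v \<le> sqrt (\<Sum>j\<le>M. (\<Sum>l\<le>M. cmod (c (int j - int l)))\<^sup>2)"
    unfolding v by simp
qed

lemma toeplitz_opnorm_nonneg: "toeplitz_opnorm c M \<ge> 0"
  unfolding toeplitz_opnorm_def
  by (rule cSup_upper2[OF _ order_refl bdd_above_toeplitz_form, of 0])
     (auto intro!: exI[of _ "\<lambda>_. 0"] simp: toeplitz_form_def sqnorm_def)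

lemma toeplitz_form_le_opnorm:
  "toeplitz_form c M x \<le> (toeplitz_opnorm c M)\<^sup>2 * sqnorm M x"
proof (cases "sqnorm M x = 0")
  case True
  then show ?thesis by (simp add: sqnorm_eq_0_imp_toeplitz_form_eq_0)
next
  case False
  then have pos: "sqnorm M x > 0"
    using sqnorm_nonneg[of M x] by linarith
  define t where "t = sqrt (sqnorm M x)"
  have t: "t > 0" "t\<^sup>2 = sqnorm M x"
    using pos by (auto simp: t_def)
  define y where "y l = of_real (1 / t) * x l" for l
  have "sqnorm M y = 1"
    using t unfolding y_def sqnorm_scale by (simp add: norm_divide power_divide flip: t(2))
  then have "sqrt (toeplitz_form c M y) \<le> toeplitz_opnorm c M"
    unfolding toeplitz_opnorm_def by (intro cSup_upper[OF _ bdd_above_toeplitz_form]) auto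
  then have "toeplitz_form c M y \<le> (toeplitz_opnorm c M)\<^sup>2"
    using toeplitz_form_nonneg by (simp add: real_sqrt_le_iff sqrt_le_D)
  moreover have "toeplitz_form c M y = toeplitz_form c M x / sqnorm M x"
    using t unfolding y_def toeplitz_form_scale by (simp add: norm_divide power_divide flip: t(2))
  ultimately show ?thesis
    using pos by (simp add: pos_divide_le_eq mult.commute)
qed

lemma toeplitz_opnorm_le:
  assumes "S \<ge> 0" and "\<And>x. toeplitz_form c M x \<le> S\<^sup>2 * sqnorm M x"
  shows "toeplitz_opnorm c M \<le> S"
  unfolding toeplitz_opnorm_def
proof (rule cSup_least)
  show "{sqrt (toeplitz_form c M x) | x. sqnorm M x \<le> 1} \<noteq> {}"
    by (auto intro!: exI[of _ "\<lambda>_. 0"] simp: sqnorm_def)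
  fix v assume "v \<in> {sqrt (toeplitz_form c M x) | x. sqnorm M x \<le> 1}"
  then obtain x where v: "v = sqrt (toeplitz_form c M x)" and x: "sqnorm M x \<le> 1" by auto
  have "toeplitz_form c M x \<le> S\<^sup>2"
    using assms(2)[of x] mult_left_le[OF x, of "S\<^sup>2"] by simp
  then show "v \<le> S"
    unfolding v using assms(1) by (simp add: real_le_lsqrt toeplitz_form_nonneg)
qed

section \<open>Dilated symbols\<close>

definition dilate :: "nat \<Rightarrow> (int \<Rightarrow> 'a::zero) \<Rightarrow> int \<Rightarrow> 'a" where
  "dilate k c n = (if int k dvd n then c (n div int k) else 0)"

lemma dilate_diff:
  assumes "s < k" "s' < k"
  shows "dilate k c (int (k*a+s) - int (k*b+s')) = (if s = s' then c (int a - int b) else 0)"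
proof -
  have eq: "int (k*a+s) - int (k*b+s') = int k * (int a - int b) + (int s - int s')"
    by (simp add: algebra_simps)
  have "int k dvd int k * (int a - int b) + (int s - int s') \<longleftrightarrow> int k dvd (int s - int s')"
    by (simp add: dvd_add_right_iff)
  also have "\<dots> \<longleftrightarrow> s = s'"
    using assms by (simp flip: mod_eq_dvd_iff)
  finally show ?thesis
    using assms unfolding dilate_def eq by auto
qed

lemma sum_atMost_mult_dvd:
  fixes G :: "nat \<Rightarrow> 'a::comm_monoid_add"
  assumes "k > 0"
  shows "(\<Sum>l\<le>k*N. if k dvd l then G l else 0) = (\<Sum>b\<le>N. G (k*b))"
proof -
  have "{l \<in> {..k*N}. k dvd l} = (\<lambda>b. k*b) ` {..N}"
    using assms by (auto elim!: dvdE simp: image_iff)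
  moreover have "inj_on (\<lambda>b. k*b) {..N}"
    using assms by (auto intro: inj_onI)
  ultimately show ?thesis
    by (simp add: sum.inter_filter[symmetric] sum.reindex)
qed

lemma sum_atMost_mult_split:
  fixes G :: "nat \<Rightarrow> 'a::comm_monoid_add"
  assumes "k > 0"
  shows "(\<Sum>l\<le>k*N. G l) = (\<Sum>b\<le>N. \<Sum>s<k. if k*b+s \<le> k*N then G (k*b+s) else 0)"
proof -
  have "(\<Sum>l\<le>k*N. G l) = (\<Sum>l<Suc N * k. if l \<le> k*N then G l else 0)"
    using assms by (intro sum.mono_neutral_cong_left) (auto simp: mult.commute)
  also have "\<dots> = (\<Sum>b<Suc N. \<Sum>l\<in>{b*k..<b*k+k}. if l \<le> k*N then G l else 0)"
    by (rule sum.nat_group[symmetric])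
  also have "\<dots> = (\<Sum>b\<le>N. \<Sum>s<k. if k*b+s \<le> k*N then G (k*b+s) else 0)"
  proof (rule sum.cong)
    fix b
    have "{b*k..<b*k+k} = {0+b*k..<k+b*k}"
      by (simp add: add.commute)
    then show "(\<Sum>l\<in>{b*k..<b*k+k}. if l \<le> k*N then G l else 0)
        = (\<Sum>s<k. if k*b+s \<le> k*N then G (k*b+s) else 0)"
      by (simp only: sum.shift_bounds_nat_ivl atLeast0LessThan, intro sum.cong refl) (simp add: ac_simps)
  qed (simp add: lessThan_Suc_atMost)
  finally show ?thesis .
qed

lemma toeplitz_opnorm_le_dilate:
  assumes k: "k > 0"
  shows "toeplitz_opnorm c N \<le> toeplitz_opnorm (dilate k c) (k*N)"
proof (rule toeplitz_opnorm_le[OF toeplitz_opnorm_nonneg])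
  fix x :: "nat \<Rightarrow> complex"
  define y where "y l = (if k dvd l then x (l div k) else 0)" for l
  have row: "(\<Sum>l\<le>k*N. dilate k c (int (k*a) - int l) * y l) = (\<Sum>b\<le>N. c (int a - int b) * x b)" for a
  proof -
    have "(\<Sum>l\<le>k*N. dilate k c (int (k*a) - int l) * y l)
        = (\<Sum>l\<le>k*N. if k dvd l then dilate k c (int (k*a) - int l) * x (l div k) else 0)"
      by (auto simp: y_def intro!: sum.cong)
    also have "\<dots> = (\<Sum>b\<le>N. c (int a - int b) * x b)"
      unfolding sum_atMost_mult_dvd[OF k] using dilate_diff[of 0 k 0 c a] k by simp
    finally show ?thesis .
  qed
  have "sqnorm (k*N) y = (\<Sum>l\<le>k*N. if k dvd l then (cmod (x (l div k)))\<^sup>2 else 0)"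
    unfolding sqnorm_def by (auto simp: y_def intro!: sum.cong)
  also have "\<dots> = sqnorm N x"
    unfolding sqnorm_def using k by (simp add: sum_atMost_mult_dvd)
  finally have sqnorm_y: "sqnorm (k*N) y = sqnorm N x" .
  have "toeplitz_form c N x
      = (\<Sum>j\<le>k*N. if k dvd j then (cmod (\<Sum>l\<le>k*N. dilate k c (int j - int l) * y l))\<^sup>2 else 0)"
    unfolding toeplitz_form_def sum_atMost_mult_dvd[OF k] row ..
  also have "\<dots> \<le> toeplitz_form (dilate k c) (k*N) y"
    unfolding toeplitz_form_def by (intro sum_mono) auto
  also have "\<dots> \<le> (toeplitz_opnorm (dilate k c) (k*N))\<^sup>2 * sqnorm N x"
    using toeplitz_form_le_opnorm[of "dilate k c" "k*N" y] unfolding sqnorm_y .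
  finally show "toeplitz_form c N x \<le> (toeplitz_opnorm (dilate k c) (k*N))\<^sup>2 * sqnorm N x" .
qed

lemma toeplitz_opnorm_dilate_le:
  assumes k: "k > 0"
  shows "toeplitz_opnorm (dilate k c) (k*N) \<le> toeplitz_opnorm c N"
proof (rule toeplitz_opnorm_le[OF toeplitz_opnorm_nonneg])
  fix y :: "nat \<Rightarrow> complex"
  define z where "z s b = (if k*b+s \<le> k*N then y (k*b+s) else 0)" for s b
  have row: "(\<Sum>l\<le>k*N. dilate k c (int (k*a+s) - int l) * y l) = (\<Sum>b\<le>N. c (int a - int b) * z s b)"
    if s: "s < k" for a s
  proof -
    have "(\<Sum>l\<le>k*N. dilate k c (int (k*a+s) - int l) * y l)
        = (\<Sum>b\<le>N. \<Sum>s'<k. if k*b+s' \<le> k*N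
            then dilate k c (int (k*a+s) - int (k*b+s')) * y (k*b+s') else 0)"
      by (rule sum_atMost_mult_split[OF k])
    also have "\<dots> = (\<Sum>b\<le>N. \<Sum>s'<k. if s' = s then c (int a - int b) * z s b else 0)"
    proof (intro sum.cong refl)
      fix b s' assume "s' \<in> {..<k}"
      then show "(if k*b+s' \<le> k*N then dilate k c (int (k*a+s) - int (k*b+s')) * y (k*b+s') else 0)
          = (if s' = s then c (int a - int b) * z s b else 0)"
        using dilate_diff[OF s, of s' c a b] by (auto simp: z_def)
    qed
    also have "\<dots> = (\<Sum>b\<le>N. c (int a - int b) * z s b)"
      using s by simp
    finally show ?thesis .
  qed
  have "sqnorm (k*N) y = (\<Sum>b\<le>N. \<Sum>s<k. (cmod (z s b))\<^sup>2)"
    unfolding sqnorm_def sum_atMost_mult_split[OF k] by (auto simp: z_def intro!: sum.cong)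
  also have "\<dots> = (\<Sum>s<k. sqnorm N (z s))"
    unfolding sqnorm_def by (rule sum.swap)
  finally have sqnorm_y: "sqnorm (k*N) y = (\<Sum>s<k. sqnorm N (z s))" .
  have "toeplitz_form (dilate k c) (k*N) y
      \<le> (\<Sum>b\<le>N. \<Sum>s<k. (cmod (\<Sum>l\<le>k*N. dilate k c (int (k*b+s) - int l) * y l))\<^sup>2)"
    unfolding toeplitz_form_def sum_atMost_mult_split[OF k] by (intro sum_mono) auto
  also have "\<dots> = (\<Sum>b\<le>N. \<Sum>s<k. (cmod (\<Sum>l\<le>N. c (int b - int l) * z s l))\<^sup>2)"
    by (intro sum.cong refl) (simp only: row lessThan_iff)
  also have "\<dots> = (\<Sum>s<k. toeplitz_form c N (z s))"
    unfolding toeplitz_form_def by (rule sum.swap)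
  also have "\<dots> \<le> (\<Sum>s<k. (toeplitz_opnorm c N)\<^sup>2 * sqnorm N (z s))"
    by (intro sum_mono toeplitz_form_le_opnorm)
  finally show "toeplitz_form (dilate k c) (k*N) y \<le> (toeplitz_opnorm c N)\<^sup>2 * sqnorm (k*N) y"
    by (simp add: sqnorm_y sum_distrib_left)
qed

lemma toeplitz_opnorm_dilate:
  "k > 0 \<Longrightarrow> toeplitz_opnorm (dilate k c) (k*N) = toeplitz_opnorm c N"
  by (intro antisym toeplitz_opnorm_dilate_le toeplitz_opnorm_le_dilate)

section \<open>Fourier coefficients of f(z^k)\<close>

lemma cis_angle_mod_2pi:
  fixes t :: real
  defines "r \<equiv> 2*pi * frac (t / (2*pi))"
  shows "r \<in> {0..2*pi}" and "cis r = cis t"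
proof -
  show "r \<in> {0..2*pi}"
    using frac_lt_1[of "t / (2*pi)"] by (simp add: r_def)
  have "r = t - 2*pi * of_int \<lfloor>t / (2*pi)\<rfloor>"
    by (simp add: r_def frac_def algebra_simps)
  then show "cis r = cis t"
    by (simp flip: cis_divide)
qed

lemma Linf_circle_borel_measurable:
  assumes "Linf_circle f"
  shows "(\<lambda>t. f (cis t)) \<in> borel_measurable borel"
proof -
  define F where "F u = indicator {0..2*pi} u *\<^sub>R f (cis u)" for u :: real
  have [measurable]: "F \<in> borel_measurable borel"
    using assms unfolding Linf_circle_def set_borel_measurable_def F_def by simp
  have "f (cis t) = F (2*pi * frac (t / (2*pi)))" for t
    using cis_angle_mod_2pi[of t] by (simp add: F_def)
  moreover have "(\<lambda>t. F (2*pi * frac (t / (2*pi)))) \<in> borel_measurable borel"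
    unfolding frac_def by measurable
  ultimately show ?thesis
    by simp
qed

lemma Linf_circle_set_integrable:
  assumes "Linf_circle f"
  shows "set_integrable lborel {0..2*pi} (\<lambda>t. f (cis t) * cis (a * t))"
proof -
  obtain C where C: "AE t in lborel. t \<in> {0..2*pi} \<longrightarrow> norm (f (cis t)) \<le> C"
    using assms unfolding Linf_circle_def by auto
  have [measurable]: "(\<lambda>t. f (cis t)) \<in> borel_measurable borel"
    using assms by (rule Linf_circle_borel_measurable)
  have [measurable]: "(\<lambda>t. cis (a * t)) \<in> borel_measurable borel"
    by (intro borel_measurable_continuous_onI continuous_intros)
  show ?thesis
    unfolding set_integrable_def
  proof (rule integrableI_bounded_set[where A="{0..2*pi}" and B=C])
    show "AE t in lborel. t \<in> {0..2*pi} \<longrightarrow>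
        norm (indicator {0..2*pi} t *\<^sub>R (f (cis t) * cis (a * t))) \<le> C"
      using C by eventually_elim (auto simp: norm_mult)
  qed auto
qed

lemma quasi_periodic_iterate:
  fixes H :: "real \<Rightarrow> 'a::monoid_mult"
  assumes "\<And>s. H (s + 2*pi) = w * H s"
  shows "H (s + 2*pi*real j) = w^j * H s"
proof (induction j)
  case (Suc j)
  have "H (s + 2*pi*real (Suc j)) = w * H (s + 2*pi*real j)"
    using assms[of "s + 2*pi*real j"] by (simp add: algebra_simps)
  then show ?case
    using Suc by (simp add: mult.assoc)
qed simp

lemma has_integral_quasi_periodic:
  fixes H :: "real \<Rightarrow> 'a::{real_normed_field,banach}"
  assumes I: "(H has_integral I) {0..2*pi}" and per: "\<And>s. H (s + 2*pi) = w * H s"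
  shows "(H has_integral (\<Sum>i<j. w^i) * I) {0..2*pi*real j}"
proof (induction j)
  case 0
  then show ?case
    using has_integral_refl(2)[of H 0] by simp
next
  case (Suc j)
  have "((\<lambda>x. H (x - 2*pi*real j)) has_integral I) {2*pi*real j..2*pi*real (Suc j)}"
    using has_integral_affinity'[of H I 0 "2*pi" 1 "-(2*pi*real j)"] I by (simp add: algebra_simps)
  then have "((\<lambda>x. w^j * H (x - 2*pi*real j)) has_integral w^j * I) {2*pi*real j..2*pi*real (Suc j)}"
    by (rule has_integral_mult_right)
  moreover have "w^j * H (x - 2*pi*real j) = H x" for x
    using quasi_periodic_iterate[of H w, OF per, of "x - 2*pi*real j" j] by simp
  ultimately have "(H has_integral w^j * I) {2*pi*real j..2*pi*real (Suc j)}"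
    by simp
  from has_integral_combine[OF _ _ Suc this]
  show ?case
    by (simp add: algebra_simps)
qed

lemma has_integral_dilate_quasi_periodic:
  fixes H :: "real \<Rightarrow> 'a::{real_normed_field,banach}"
  assumes "(H has_integral I) {0..2*pi}" and "\<And>s. H (s + 2*pi) = w * H s" and "k > 0"
  shows "((\<lambda>x. H (real k * x)) has_integral (\<Sum>i<k. w^i) * I / of_nat k) {0..2*pi}"
proof -
  have k: "real k > 0"
    using assms(3) by simp
  have box: "cbox ((0 - 0) /\<^sub>R real k) ((2*pi*real k - 0) /\<^sub>R real k) = {0..2*pi}"
    using k by simp
  have "(H has_integral (\<Sum>i<k. w^i) * I) (cbox 0 (2*pi*real k))"
    using has_integral_quasi_periodic[OF assms(1,2)] by simp
  from has_integral_affinity'[OF this k, of 0]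
  show ?thesis
    unfolding box using k by (simp add: scaleR_conv_of_real divide_inverse mult.commute)
qed

lemma sum_powers_root_of_unity:
  assumes "k > 0"
  shows "(\<Sum>i<k. cis (2*pi * of_int n / real k) ^ i) = (if int k dvd n then of_nat k else 0)"
proof (cases "int k dvd n")
  case True
  then obtain m where "n = int k * m" ..
  then have "2*pi * of_int n / real k = 2*pi * of_int m"
    using assms by simp
  then have "cis (2*pi * of_int n / real k) = 1"
    by simp
  then show ?thesis
    using True by simp
next
  case False
  define w where "w = cis (2*pi * of_int n / real k)"
  have "w^k = cis (2*pi * of_int n)"
    unfolding w_def Complex.DeMoivre using assms by simp
  then have "w^k = 1"
    by simp
  moreover have "w \<noteq> 1"
  proof
    assume "w = 1"
    then obtain j :: int where "2*pi * of_int n / real k = 2*pi * of_int j"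
      by (auto simp: w_def complex_eq_iff cos_one_2pi_int)
    then have "n = int k * j"
      using assms by (simp add: field_simps) (metis of_int_eq_iff of_int_mult of_int_of_nat_eq)
    then show False
      using False by simp
  qed
  ultimately show ?thesis
    using False by (simp add: w_def[symmetric] sum_gp_strict)
qed

lemma set_integrable_lborel_if_absolutely_integrable:
  fixes g :: "'a::euclidean_space \<Rightarrow> 'b::euclidean_space"
  assumes "g \<in> borel_measurable borel" and "S \<in> sets borel" and "g absolutely_integrable_on S"
  shows "set_integrable lborel S g"
  using assms unfolding set_integrable_def absolutely_integrable_on_def
  by (subst integrable_completion[symmetric]) auto

lemma cis_add_2pi: "cis (s + 2*pi) = cis s"
  by (simp flip: cis_mult)

lemma Linf_circle_dilate_norm_integrable:
  assumes f: "Linf_circle f" and k: "k > 0"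
  shows "(\<lambda>t. cmod (f (cis (real k * t)))) integrable_on {0..2*pi}"
proof -
  have "set_integrable lborel {0..2*pi} (\<lambda>s. cmod (f (cis s) * cis (0 * s)))"
    by (rule set_integrable_norm[OF Linf_circle_set_integrable[OF f]])
  then have "((\<lambda>s. cmod (f (cis s))) has_integral integral {0..2*pi} (\<lambda>s. cmod (f (cis s))))
      {0..2*pi}"
    using set_borel_integral_eq_integral(1) by (simp add: norm_mult has_integral_integral)
  from has_integral_dilate_quasi_periodic[OF this _ k, of 1]
  show ?thesis
    by (auto simp: cis_add_2pi integrable_on_def)
qed

lemma set_integral_circle_power:
  assumes f: "Linf_circle f" and k: "k > 0"
  shows "(LINT t:{0..2*pi}|lborel. f (cis t ^ k) * cis (b * t))
       = (\<Sum>i<k. cis (2*pi * b / real k) ^ i)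
         * (LINT s:{0..2*pi}|lborel. f (cis s) * cis (b / real k * s)) / of_nat k"
    (is "?lhs = ?sum * ?I / _")
proof -
  define H where "H s = f (cis s) * cis (b / real k * s)" for s
  define G where "G t = f (cis t ^ k) * cis (b * t)" for t
  have G_eq: "G t = H (real k * t)" for t
    using k by (simp add: G_def H_def Complex.DeMoivre)
  have "(H has_integral ?I) {0..2*pi}"
    using set_borel_integral_eq_integral[OF Linf_circle_set_integrable[OF f, of "b / real k"]]
    unfolding H_def by (simp add: has_integral_integral)
  moreover have "H (s + 2*pi) = cis (2*pi * b / real k) * H s" for s
    unfolding H_def cis_add_2pi by (simp add: cis_mult algebra_simps)
  ultimately have G_int: "(G has_integral ?sum * ?I / of_nat k) {0..2*pi}"
    unfolding G_eq by (rule has_integral_dilate_quasi_periodic[OF _ _ k])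
  have "(\<lambda>t. norm (G t)) integrable_on {0..2*pi}"
    using Linf_circle_dilate_norm_integrable[OF f k] by (simp add: G_eq H_def norm_mult)
  moreover have "G \<in> borel_measurable borel"
  proof -
    have [measurable]: "cis \<in> borel_measurable borel"
      by (intro borel_measurable_continuous_onI continuous_intros)
    show ?thesis
      using Linf_circle_borel_measurable[OF f] unfolding G_eq H_def by measurable
  qed
  ultimately have "set_integrable lborel {0..2*pi} G"
    using G_int by (intro set_integrable_lborel_if_absolutely_integrable absolutely_integrable_onI)
      (auto simp: integrable_on_def)
  then have "?lhs = integral {0..2*pi} G"
    unfolding G_def by (rule set_borel_integral_eq_integral(2))
  with G_int show ?thesis
    by (simp add: integral_unique)
qed

lemma fourier_coeff_circle_power:
  assumes f: "Linf_circle f" and k: "k > 0"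
  shows "fourier_coeff (\<lambda>z. f (z ^ k)) = dilate k (fourier_coeff f)"
proof
  fix n
  have "fourier_coeff (\<lambda>z. f (z ^ k)) n
      = of_real (1 / (2*pi)) * (\<Sum>i<k. cis (2*pi * of_int (-n) / real k) ^ i)
        * (LINT s:{0..2*pi}|lborel. f (cis s) * cis (- (of_int n / real k * s))) / of_nat k"
    unfolding fourier_coeff_def
    using set_integral_circle_power[OF f k, of "- of_int n"] by simp
  also have "\<dots> = of_real (1 / (2*pi)) * (if int k dvd n then of_nat k else 0)
        * (LINT s:{0..2*pi}|lborel. f (cis s) * cis (- (of_int n / real k * s))) / of_nat k"
    unfolding sum_powers_root_of_unity[OF k] by simp
  also have "\<dots> = dilate k (fourier_coeff f) n"
    using k by (auto simp: dilate_def fourier_coeff_def elim!: dvdE)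
  finally show "fourier_coeff (\<lambda>z. f (z ^ k)) n = dilate k (fourier_coeff f) n" .
qed

theorem proposition7p1:
  fixes f :: "complex \<Rightarrow> complex" and N k :: nat
  assumes "Linf_circle f" and "N > 0" and "k > 0"
  shows "toeplitz_norm f N = toeplitz_norm (\<lambda>z. f (z ^ k)) (k * N)"
  using assms
  by (simp add: toeplitz_norm_eq_opnorm fourier_coeff_circle_power toeplitz_opnorm_dilate)

end
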